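(* If $pn\ge 10^{17}$, then with probability $1-o(n^{-2})$ (as $n\to\infty$) the random graph $G=G(n,p)$ has the following property: for every $U\subseteq V(G)$ with $|U|\ge 4n/10^6$, if there is a subgraph $H\subseteq G$ with $V(H)=U$ and $e(H)\le pn^2/10^{17}$ which is a $(|U|,2)$-expander, then $G[U]$ is Hamiltonian.
   Context: $G(n,p)$ is the binomial random graph on $[n]$. A graph $H$ with $N$ vertices is an $(N,2)$-expander if every $A\subseteq V(H)$ with $|A|\le N/4$ satisfies $|N_H(A)|\ge 2|A|$, where $N_H(A)=\big(\bigcup_{a\in A}N_H(a)\big)\setminus A$. $e(H)$ is the number of edges of $H$. *)

theory Defs
  imports Complex_Main "HOL-Library.Landau_Symbols"
begin

text \<open>Simple graphs on vertex set [n] = {0..<n}, represented by their edge sets: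
  an edge is a 2-element set {u,v} with u \<noteq> v.\<close>

definition all_edges :: "nat \<Rightarrow> nat set set" where
  "all_edges n = {e. \<exists>u v. u < n \<and> v < n \<and> u \<noteq> v \<and> e = {u, v}}"

definition gnp_prob :: "nat \<Rightarrow> real \<Rightarrow> (nat set set \<Rightarrow> bool) \<Rightarrow> real" where
  "gnp_prob n p P =
     (\<Sum>E\<in>Pow (all_edges n).
        (if P E then p ^ card E * (1 - p) ^ (card (all_edges n) - card E) else 0))"

definition nbhd :: "nat set set \<Rightarrow> nat set \<Rightarrow> nat set" where
  "nbhd F A = (\<Union>a\<in>A. {b. {a, b} \<in> F}) - A"

text \<open>(N,2)-expander: graph H with vertex set U (|U| = N) and edge set F.\<close>

definition is_expander2 :: "nat set \<Rightarrow> nat set set \<Rightarrow> bool" where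
  "is_expander2 U F \<longleftrightarrow>
     (\<forall>A. A \<subseteq> U \<and> real (card A) \<le> real (card U) / 4
          \<longrightarrow> card (nbhd F A) \<ge> 2 * card A)"

definition subgraph_on :: "nat set set \<Rightarrow> nat set \<Rightarrow> nat set set \<Rightarrow> bool" where
  "subgraph_on E U F \<longleftrightarrow> F \<subseteq> E \<and> (\<forall>e\<in>F. e \<subseteq> U)"

text \<open>The induced subgraph G[U] is Hamiltonian: a cycle (of length at least 3)
  through all vertices of U, using edges of G (which then lie inside U).\<close>

definition hamiltonian_on :: "nat set set \<Rightarrow> nat set \<Rightarrow> bool" where
  "hamiltonian_on E U \<longleftrightarrow>
     (\<exists>vs. distinct vs \<and> set vs = U \<and> length vs \<ge> 3 \<and>
        (\<forall>i < length vs - 1. {vs ! i, vs ! (i + 1)} \<in> E) \<and>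
        {last vs, hd vs} \<in> E)"

definition lemma_property :: "nat \<Rightarrow> real \<Rightarrow> nat set set \<Rightarrow> bool" where
  "lemma_property n p E \<longleftrightarrow>
     (\<forall>U. U \<subseteq> {..<n} \<and> real (card U) \<ge> 4 * real n / 10^6 \<longrightarrow>
        (\<exists>F. subgraph_on E U F \<and> real (card F) \<le> p * real n ^ 2 / 10^17
              \<and> is_expander2 U F) \<longrightarrow> hamiltonian_on E U)"

end

theory Submission
  imports Defs "HOL-Real_Asymp.Real_Asymp"
begin

(* If G = G(n,p) fails the property, some U with |U| >= 4n/10^6 carries an expander F with few
   edges while G[U] is not Hamiltonian. Adding to F the edges of a longest path of G[U] gives a
   graph H that is still a non-Hamiltonian expander, has at most pn^2/10^17 + n edges, and has the
   same longest path length as G[U]. By Posa's rotation-extension technique an expander H on U has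
   at least |U|^2/32 boosters: pairs whose addition makes H Hamiltonian on U or lengthens its
   longest path. So G contains H but none of its boosters, an event of probability at most
   p^e(H) exp(-p |U|^2/32). Summing over the at most 2^n sets U and over all H with few edges
   (each weighted by e^(100 e(H)) to absorb the edge bound) gives exp(-n) = o(n^-2). *)

section \<open>Paths as vertex lists\<close>

lemma last_take_Suc: "k < length xs \<Longrightarrow> last (take (Suc k) xs) = xs ! k"
  by (simp add: take_Suc_conv_app_nth)

fun path_edges :: "'a list \<Rightarrow> 'a set set" where
  "path_edges [] = {}"
| "path_edges [x] = {}"
| "path_edges (x # y # xs) = insert {x, y} (path_edges (y # xs))"

lemma path_edges_Cons: "xs \<noteq> [] \<Longrightarrow> path_edges (x # xs) = insert {x, hd xs} (path_edges xs)"
  by (cases xs) auto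

lemma path_edges_append:
  "xs \<noteq> [] \<Longrightarrow> ys \<noteq> [] \<Longrightarrow>
     path_edges (xs @ ys) = path_edges xs \<union> path_edges ys \<union> {{last xs, hd ys}}"
  by (induction xs rule: path_edges.induct) (auto simp: path_edges_Cons)

lemma path_edges_snoc: "xs \<noteq> [] \<Longrightarrow> path_edges (xs @ [y]) = insert {last xs, y} (path_edges xs)"
  by (simp add: path_edges_append)

lemma path_edges_rev: "path_edges (rev xs) = path_edges xs"
proof (induction xs)
  case (Cons x xs)
  then show ?case
    by (cases "xs = []") (simp_all add: path_edges_snoc path_edges_Cons last_rev insert_commute)
qed simp

lemma mem_path_edges_iff: "e \<in> path_edges xs \<longleftrightarrow> (\<exists>k. Suc k < length xs \<and> e = {xs ! k, xs ! Suc k})"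
proof (induction xs rule: path_edges.induct)
  case (3 x y xs)
  have "(\<exists>k. Suc k < length (x # y # xs) \<and> e = {(x # y # xs) ! k, (x # y # xs) ! Suc k})
      \<longleftrightarrow> e = {x, y} \<or> (\<exists>k. Suc k < length (y # xs) \<and> e = {(y # xs) ! k, (y # xs) ! Suc k})"
    by (auto simp: less_Suc_eq_0_disj)
  with 3 show ?case by simp
qed auto

lemma path_edges_nth: "Suc k < length xs \<Longrightarrow> {xs ! k, xs ! Suc k} \<in> path_edges xs"
  by (auto simp: mem_path_edges_iff)

lemma path_edges_subset_set: "e \<in> path_edges xs \<Longrightarrow> e \<subseteq> set xs"
  by (auto simp: mem_path_edges_iff)

lemma card_path_edges_le: "card (path_edges xs) \<le> length xs"
  by (induction xs rule: path_edges.induct) (auto intro: le_trans[OF card_insert_le_m1])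

lemma path_edges_subset_iff:
  "path_edges xs \<subseteq> E \<longleftrightarrow> (\<forall>i < length xs - 1. {xs ! i, xs ! (i + 1)} \<in> E)"
  using path_edges_nth by (fastforce simp: mem_path_edges_iff less_diff_conv)

definition path_nbrs :: "'a list \<Rightarrow> 'a \<Rightarrow> 'a set" where
  "path_nbrs xs x = {y. {x, y} \<in> path_edges xs}"

lemma path_nbrs_sym: "y \<in> path_nbrs xs x \<longleftrightarrow> x \<in> path_nbrs xs y"
  by (simp add: path_nbrs_def insert_commute)

lemma path_nbrs_subset_set: "path_nbrs xs x \<subseteq> set xs"
  using path_edges_subset_set by (fastforce simp: path_nbrs_def)

lemma path_nbrs_notin: "x \<notin> set xs \<Longrightarrow> path_nbrs xs x = {}"
  using path_edges_subset_set by (fastforce simp: path_nbrs_def)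

lemma path_nbrs_nth:
  assumes "distinct xs" "j < length xs"
  shows "path_nbrs xs (xs ! j) =
    (if Suc j < length xs then {xs ! Suc j} else {}) \<union> (if 0 < j then {xs ! (j - 1)} else {})"
proof -
  have "{xs ! j, y} = {xs ! k, xs ! Suc k} \<longleftrightarrow> (k = j \<and> y = xs ! Suc j) \<or> (Suc k = j \<and> y = xs ! k)"
    if "Suc k < length xs" for k y
    using assms that by (auto simp: doubleton_eq_iff nth_eq_iff_index_eq)
  then show ?thesis
    using assms by (auto simp: path_nbrs_def mem_path_edges_iff gr0_conv_Suc)
qed

lemma card_path_nbrs_nth:
  assumes "distinct xs" "j < length xs"
  shows "card (path_nbrs xs (xs ! j)) = of_bool (Suc j < length xs) + of_bool (0 < j)"
proof -
  have "xs ! (j - 1) \<noteq> xs ! Suc j" if "Suc j < length xs"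
    using assms that by (simp add: nth_eq_iff_index_eq)
  then show ?thesis
    using assms by (simp add: path_nbrs_nth card_insert_if)
qed

lemma card_path_nbrs_inner:
  assumes "distinct xs" "x \<in> set xs" "x \<noteq> last xs"
  shows "card (path_nbrs xs x) = (if x = hd xs then 1 else 2)"
proof -
  obtain j where j: "j < length xs" "x = xs ! j" using assms(2) by (metis in_set_conv_nth)
  then have "xs \<noteq> []" by auto
  then have "j \<noteq> length xs - 1" using assms(3) j by (auto simp: last_conv_nth)
  then have "Suc j < length xs" using j(1) by linarith
  moreover have "x = hd xs \<longleftrightarrow> j = 0"
    using j assms(1) \<open>xs \<noteq> []\<close> by (auto simp: hd_conv_nth nth_eq_iff_index_eq)
  ultimately show ?thesis using card_path_nbrs_nth[OF assms(1) j(1)] j(2) by auto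
qed

lemma card_path_nbrs_le_2: "distinct xs \<Longrightarrow> card (path_nbrs xs x) \<le> 2"
  by (cases "x \<in> set xs") (auto simp: in_set_conv_nth card_path_nbrs_nth path_nbrs_notin)

lemma card_path_nbrs_last_le_1: "distinct xs \<Longrightarrow> xs \<noteq> [] \<Longrightarrow> card (path_nbrs xs (last xs)) \<le> 1"
  by (simp add: last_conv_nth card_path_nbrs_nth)

definition is_path :: "'a set \<Rightarrow> 'a set set \<Rightarrow> 'a list \<Rightarrow> bool" where
  "is_path U G vs \<longleftrightarrow> vs \<noteq> [] \<and> distinct vs \<and> set vs \<subseteq> U \<and> path_edges vs \<subseteq> G"

definition longest_path_length :: "'a set \<Rightarrow> 'a set set \<Rightarrow> nat" where
  "longest_path_length U G = Max (length ` {vs. is_path U G vs})"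

definition is_longest_path :: "'a set \<Rightarrow> 'a set set \<Rightarrow> 'a list \<Rightarrow> bool" where
  "is_longest_path U G vs \<longleftrightarrow> is_path U G vs \<and> length vs = longest_path_length U G"

lemma is_path_rev: "is_path U G (rev vs) \<longleftrightarrow> is_path U G vs"
  by (auto simp: is_path_def path_edges_rev)

lemma is_path_mono: "is_path U G vs \<Longrightarrow> G \<subseteq> G' \<Longrightarrow> is_path U G' vs"
  by (auto simp: is_path_def)

lemma is_path_length_le_card: "finite U \<Longrightarrow> is_path U G vs \<Longrightarrow> length vs \<le> card U"
  unfolding is_path_def by (metis card_mono distinct_card)

lemma finite_paths:
  assumes "finite U"
  shows "finite {vs. is_path U G vs}"
proof (rule finite_subset)
  show "{vs. is_path U G vs} \<subseteq> {vs. set vs \<subseteq> U \<and> length vs \<le> card U}"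
    using is_path_length_le_card[OF assms] by (auto simp: is_path_def)
qed (use finite_lists_length_le[OF assms] in simp)

lemma is_path_length_le_longest:
  "finite U \<Longrightarrow> is_path U G vs \<Longrightarrow> length vs \<le> longest_path_length U G"
  unfolding longest_path_length_def using finite_paths by (intro Max_ge) auto

lemma longest_path_exists:
  assumes "finite U" "U \<noteq> {}"
  obtains vs where "is_longest_path U G vs"
proof -
  obtain u where "u \<in> U" using assms(2) by blast
  then have "is_path U G [u]" by (simp add: is_path_def)
  then have "longest_path_length U G \<in> length ` {vs. is_path U G vs}"
    unfolding longest_path_length_def using finite_paths[OF assms(1)] by (intro Max_in) auto
  then show thesis using that by (auto simp: is_longest_path_def)
qed

lemma longest_path_length_mono:
  assumes "finite U" "U \<noteq> {}" "G \<subseteq> G'"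
  shows "longest_path_length U G \<le> longest_path_length U G'"
proof -
  obtain vs where "is_longest_path U G vs" using longest_path_exists[OF assms(1,2)] .
  moreover from this have "is_path U G' vs"
    using is_path_mono assms(3) by (auto simp: is_longest_path_def)
  ultimately show ?thesis
    using is_path_length_le_longest[OF assms(1), of G' vs] by (simp add: is_longest_path_def)
qed

lemma longest_path_end_nbr_in_path:
  assumes "finite U" "is_longest_path U G vs" "{last vs, x} \<in> G" "x \<in> U"
  shows "x \<in> set vs"
proof (rule ccontr)
  assume "x \<notin> set vs"
  with assms have "is_path U G (vs @ [x])"
    by (auto simp: is_longest_path_def is_path_def path_edges_snoc)
  then show False
    using is_path_length_le_longest[OF assms(1)] assms(2) by (fastforce simp: is_longest_path_def)
qed

section \<open>Posa rotations\<close>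

(* Rotation of vs with pivot vs ! i: the edge {vs ! i, last vs} replaces {vs ! i, vs ! Suc i},
   and vs ! Suc i becomes the new end. *)
definition posa_rotation :: "'a list \<Rightarrow> nat \<Rightarrow> 'a list" where
  "posa_rotation vs i = take (Suc i) vs @ rev (drop (Suc i) vs)"

lemma length_posa_rotation [simp]: "length (posa_rotation vs i) = length vs"
  by (simp add: posa_rotation_def)

lemma set_posa_rotation [simp]: "set (posa_rotation vs i) = set vs"
  by (metis posa_rotation_def append_take_drop_id set_append set_rev)

lemma distinct_posa_rotation [simp]: "distinct (posa_rotation vs i) \<longleftrightarrow> distinct vs"
  by (metis posa_rotation_def append_take_drop_id distinct_append distinct_rev set_rev)

lemma hd_posa_rotation: "vs \<noteq> [] \<Longrightarrow> hd (posa_rotation vs i) = hd vs"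
  by (simp add: posa_rotation_def)

lemma last_posa_rotation: "Suc i < length vs \<Longrightarrow> last (posa_rotation vs i) = vs ! Suc i"
  by (simp add: posa_rotation_def last_rev hd_drop_conv_nth)

lemma path_edges_split_nth:
  assumes "Suc i < length vs"
  shows "path_edges vs =
    path_edges (take (Suc i) vs) \<union> path_edges (drop (Suc i) vs) \<union> {{vs ! i, vs ! Suc i}}"
proof -
  from assms have "vs \<noteq> []" by auto
  with assms show ?thesis
    using path_edges_append[of "take (Suc i) vs" "drop (Suc i) vs"]
    by (simp add: hd_drop_conv_nth last_take_Suc)
qed

lemma path_edges_posa_rotation:
  assumes "Suc i < length vs"
  shows "path_edges (posa_rotation vs i) =
    path_edges (take (Suc i) vs) \<union> path_edges (drop (Suc i) vs) \<union> {{vs ! i, last vs}}"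
proof -
  from assms have "vs \<noteq> []" by auto
  with assms show ?thesis
    using path_edges_append[of "take (Suc i) vs" "rev (drop (Suc i) vs)"]
    by (simp add: posa_rotation_def path_edges_rev hd_rev last_take_Suc)
qed

inductive_set rotations :: "'a set set \<Rightarrow> 'a list \<Rightarrow> 'a list set" for G P where
  base: "P \<in> rotations G P"
| step: "Q \<in> rotations G P \<Longrightarrow> Suc i < length Q \<Longrightarrow> {last Q, Q ! i} \<in> G \<Longrightarrow>
    posa_rotation Q i \<in> rotations G P"

definition rotation_ends :: "'a set set \<Rightarrow> 'a list \<Rightarrow> 'a set" where
  "rotation_ends G P = last ` rotations G P"

lemma rotations_path:
  assumes "is_path U G P" "Q \<in> rotations G P"
  shows "is_path U G Q \<and> hd Q = hd P \<and> set Q = set P \<and> length Q = length P"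
  using assms(2)
proof induction
  case (step Q i)
  then have "path_edges Q \<subseteq> G" by (simp add: is_path_def)
  then have "path_edges (posa_rotation Q i) \<subseteq> G"
    using step(3) unfolding path_edges_posa_rotation[OF step(2)] path_edges_split_nth[OF step(2)]
    by (auto simp: insert_commute)
  moreover have "posa_rotation Q i \<noteq> []"
    using step(2) by (auto simp flip: length_greater_0_conv)
  ultimately show ?case
    using step assms(1) by (simp add: is_path_def hd_posa_rotation)
qed (use assms(1) in simp)

lemma rotations_longest_path:
  "is_longest_path U G P \<Longrightarrow> Q \<in> rotations G P \<Longrightarrow> is_longest_path U G Q"
  using rotations_path[of U G P Q] by (simp add: is_longest_path_def)

lemma rotation_ends_subset:
  assumes "is_path U G P"
  shows "rotation_ends G P \<subseteq> set P"
proof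
  fix z assume "z \<in> rotation_ends G P"
  then obtain Q where "Q \<in> rotations G P" "z = last Q" by (auto simp: rotation_ends_def)
  with rotations_path[OF assms] show "z \<in> set P"
    by (metis is_path_def last_in_set)
qed

lemma path_edge_survives_rotations:
  assumes "Q \<in> rotations G P" "e \<in> path_edges P"
  shows "e \<in> path_edges Q \<or> (\<exists>z \<in> rotation_ends G P. z \<in> e)"
  using assms(1)
proof induction
  case (step Q i)
  show ?case
  proof (cases "e \<in> path_edges Q")
    case True
    then have "e \<in> path_edges (posa_rotation Q i) \<or> e = {Q ! i, Q ! Suc i}"
      unfolding path_edges_posa_rotation[OF step(2)] path_edges_split_nth[OF step(2)] by blast
    moreover have "Q ! Suc i \<in> rotation_ends G P"
      using rotations.step[OF step(1-3)] last_posa_rotation[OF step(2)]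
      by (metis rotation_ends_def image_eqI)
    ultimately show ?thesis by auto
  next
    case False
    then show ?thesis using step.IH by simp
  qed
qed (use assms(2) in simp)

(* If no P-neighbour of x were an end, every P-edge at x would survive in Q, and Q has the extra
   edge from x to its successor, itself an end. But x has equally many neighbours on P and on Q. *)
lemma rotation_end_nbr_on_path:
  assumes "finite U" "\<forall>e\<in>G. e \<subseteq> U" "is_longest_path U G P" "Q \<in> rotations G P"
    and "{last Q, x} \<in> G" "x \<notin> rotation_ends G P"
  shows "\<exists>z \<in> rotation_ends G P. x \<in> path_nbrs P z"
proof (rule ccontr)
  assume no_end: "\<not> ?thesis"
  have P: "is_path U G P" using assms(3) by (simp add: is_longest_path_def)
  have Q: "is_longest_path U G Q" using rotations_longest_path[OF assms(3,4)] .
  have "hd Q = hd P" "set Q = set P" using rotations_path[OF P assms(4)] by auto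
  have "distinct P" "distinct Q" "Q \<noteq> []"
    using P Q by (auto simp: is_path_def is_longest_path_def)
  have "x \<in> set Q"
    using longest_path_end_nbr_in_path[OF assms(1) Q assms(5)] assms(2,5) by blast
  have "last Q \<in> rotation_ends G P" "last P \<in> rotation_ends G P"
    using assms(4) rotations.base by (auto simp: rotation_ends_def)
  then have "x \<noteq> last Q" "x \<noteq> last P" using assms(6) by auto
  obtain i where i: "i < length Q" "x = Q ! i" using \<open>x \<in> set Q\<close> by (metis in_set_conv_nth)
  then have "i \<noteq> length Q - 1" using \<open>x \<noteq> last Q\<close> \<open>Q \<noteq> []\<close> by (auto simp: last_conv_nth)
  then have si: "Suc i < length Q" using i(1) by linarith
  define z where "z = Q ! Suc i"
  have "z \<in> rotation_ends G P"
    using rotations.step[OF assms(4) si] assms(5) i last_posa_rotation[OF si]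
    unfolding z_def rotation_ends_def by (metis image_eqI)
  have "z \<in> path_nbrs Q x"
    using path_edges_nth[OF si] i by (simp add: z_def path_nbrs_def)
  have "path_nbrs P x \<subseteq> path_nbrs Q x - {z}"
  proof
    fix y assume y: "y \<in> path_nbrs P x"
    then have "y \<notin> rotation_ends G P" using no_end path_nbrs_sym[THEN iffD1, OF y] by blast
    moreover have "{x, y} \<in> path_edges Q \<or> (\<exists>w \<in> rotation_ends G P. w \<in> {x, y})"
      using path_edge_survives_rotations[OF assms(4), of "{x, y}"] y by (simp add: path_nbrs_def)
    ultimately show "y \<in> path_nbrs Q x - {z}"
      using assms(6) \<open>z \<in> rotation_ends G P\<close> by (auto simp: path_nbrs_def)
  qed
  moreover have fin: "finite (path_nbrs Q x)"
    using finite_subset[OF path_nbrs_subset_set finite_set] .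
  ultimately have "card (path_nbrs P x) \<le> card (path_nbrs Q x - {z})"
    by (intro card_mono) auto
  also have "\<dots> < card (path_nbrs Q x)"
    using card_Diff1_less[OF fin \<open>z \<in> path_nbrs Q x\<close>] .
  finally have "card (path_nbrs P x) < card (path_nbrs Q x)" .
  moreover have "card (path_nbrs P x) = card (path_nbrs Q x)"
    using card_path_nbrs_inner[OF \<open>distinct P\<close>] card_path_nbrs_inner[OF \<open>distinct Q\<close>]
      \<open>x \<in> set Q\<close> \<open>set Q = set P\<close> \<open>x \<noteq> last Q\<close> \<open>x \<noteq> last P\<close> \<open>hd Q = hd P\<close>
    by simp
  ultimately show False by simp
qed

lemma rotation_ends_nbhd_subset:
  assumes "finite U" "\<forall>e\<in>G. e \<subseteq> U" "is_longest_path U G P"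
  shows "nbhd G (rotation_ends G P) \<subseteq> (\<Union>z \<in> rotation_ends G P. path_nbrs P z)"
proof
  fix x assume "x \<in> nbhd G (rotation_ends G P)"
  then obtain a where "a \<in> rotation_ends G P" "{a, x} \<in> G" "x \<notin> rotation_ends G P"
    by (auto simp: nbhd_def)
  moreover from this obtain Q where "Q \<in> rotations G P" "a = last Q"
    by (auto simp: rotation_ends_def)
  ultimately obtain z where "z \<in> rotation_ends G P" "x \<in> path_nbrs P z"
    using rotation_end_nbr_on_path[OF assms] by metis
  then show "x \<in> (\<Union>z \<in> rotation_ends G P. path_nbrs P z)" by blast
qed

lemma card_UN_path_nbrs_less:
  assumes "distinct P" "P \<noteq> []" "finite S" "last P \<in> S"
  shows "card (\<Union>z\<in>S. path_nbrs P z) < 2 * card S"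
proof -
  have "card (\<Union>z\<in>S. path_nbrs P z) \<le> (\<Sum>z\<in>S. card (path_nbrs P z))"
    using card_UN_le[OF assms(3)] .
  also have "\<dots> = card (path_nbrs P (last P)) + (\<Sum>z\<in>S - {last P}. card (path_nbrs P z))"
    using sum.remove[OF assms(3,4)] .
  also have "\<dots> \<le> 1 + 2 * card (S - {last P})"
    using card_path_nbrs_last_le_1[OF assms(1,2)] card_path_nbrs_le_2[OF assms(1)]
      sum_bounded_above[of "S - {last P}" "\<lambda>z. card (path_nbrs P z)" 2]
    by (simp add: mult.commute add_mono)
  also have "\<dots> < 2 * card S"
  proof -
    have "card S > 0" using assms(3,4) card_gt_0_iff by blast
    then show ?thesis using assms(3,4) by (simp add: card_Diff_singleton)
  qed
  finally show ?thesis .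
qed

lemma card_rotation_ends_gt:
  assumes "finite U" "\<forall>e\<in>G. e \<subseteq> U" "is_expander2 U G" "is_longest_path U G P"
  shows "real (card (rotation_ends G P)) > real (card U) / 4"
proof (rule ccontr)
  assume small: "\<not> ?thesis"
  have P: "is_path U G P" using assms(4) by (simp add: is_longest_path_def)
  have ends_subset: "rotation_ends G P \<subseteq> set P" using rotation_ends_subset[OF P] .
  have "rotation_ends G P \<subseteq> U" using ends_subset P by (auto simp: is_path_def)
  with assms(3) small have "2 * card (rotation_ends G P) \<le> card (nbhd G (rotation_ends G P))"
    unfolding is_expander2_def by (meson not_less)
  also have "\<dots> \<le> card (\<Union>z \<in> rotation_ends G P. path_nbrs P z)"
  proof (rule card_mono)
    show "finite (\<Union>z \<in> rotation_ends G P. path_nbrs P z)"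
      by (rule finite_subset[OF UN_least[OF path_nbrs_subset_set] finite_set])
  qed (rule rotation_ends_nbhd_subset[OF assms(1,2,4)])
  also have "\<dots> < 2 * card (rotation_ends G P)"
  proof (rule card_UN_path_nbrs_less)
    show "finite (rotation_ends G P)" using ends_subset finite_subset by blast
    show "last P \<in> rotation_ends G P" unfolding rotation_ends_def using rotations.base by blast
  qed (use P in \<open>auto simp: is_path_def\<close>)
  finally show False by simp
qed

section \<open>Boosters of expanders\<close>

lemma expander_closed_set_large:
  assumes "finite U" "is_expander2 U G" "Y \<subseteq> U" "Y \<noteq> {}"
    and closed: "\<forall>a\<in>Y. \<forall>b. {a, b} \<in> G \<longrightarrow> b \<in> Y"
  shows "3 * (card U div 4) \<le> card Y"
proof -
  define k where "k = card U div 4"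
  have k: "real k \<le> real (card U) / 4" unfolding k_def by linarith
  have "finite Y" using assms(1,3) finite_subset by blast
  have nbhd_subset: "nbhd G A \<subseteq> Y - A" if "A \<subseteq> Y" for A
    using that closed by (auto simp: nbhd_def)
  have "k < card Y"
  proof (rule ccontr)
    assume "\<not> k < card Y"
    then have "real (card Y) \<le> real (card U) / 4" using k by linarith
    then have "2 * card Y \<le> card (nbhd G Y)" using assms(2,3) by (simp add: is_expander2_def)
    moreover have "nbhd G Y = {}" using nbhd_subset[of Y] by simp
    moreover have "card Y > 0" using \<open>finite Y\<close> assms(4) by (simp add: card_gt_0_iff)
    ultimately show False by simp
  qed
  then obtain A where A: "A \<subseteq> Y" "card A = k"
    using obtain_subset_with_card_n[of k Y] by (metis less_imp_le)
  then have "2 * k \<le> card (nbhd G A)"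
    using assms(2,3) k by (auto simp: is_expander2_def)
  also have "\<dots> \<le> card (Y - A)"
    using card_mono[OF _ nbhd_subset[OF A(1)]] \<open>finite Y\<close> by simp
  also have "\<dots> = card Y - k"
    using A \<open>finite Y\<close> by (simp add: card_Diff_subset finite_subset)
  finally show ?thesis unfolding k_def by linarith
qed

lemma expander_edge_leaving:
  assumes "finite U" "8 \<le> card U" "\<forall>e\<in>G. e \<subseteq> U" "is_expander2 U G"
    and "X \<subseteq> U" "X \<noteq> {}" "X \<noteq> U"
  shows "\<exists>a\<in>X. \<exists>b\<in>U - X. {a, b} \<in> G"
proof (rule ccontr)
  assume no_edge: "\<not> ?thesis"
  have "\<forall>a\<in>X. \<forall>b. {a, b} \<in> G \<longrightarrow> b \<in> X"
    using no_edge assms(3) by blast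
  then have "3 * (card U div 4) \<le> card X"
    using expander_closed_set_large[OF assms(1,4,5,6)] by blast
  moreover have "\<forall>a\<in>U - X. \<forall>b. {a, b} \<in> G \<longrightarrow> b \<in> U - X"
    using no_edge assms(3) by (metis Diff_iff insert_commute insert_subset)
  then have "3 * (card U div 4) \<le> card (U - X)"
    using expander_closed_set_large[OF assms(1,4)] assms(5,7) by blast
  moreover have "card (U - X) = card U - card X"
    using assms(1,5) by (simp add: card_Diff_subset finite_subset)
  moreover have "card X \<le> card U" using assms(1,5) by (simp add: card_mono)
  moreover have "card U < 6 * (card U div 4)" using assms(2) by presburger
  ultimately show False by linarith
qed

definition boosters :: "nat set \<Rightarrow> nat set set \<Rightarrow> nat set set" where
  "boosters U G = {{x, y} | x y. x \<in> U \<and> y \<in> U \<and> x \<noteq> y \<and>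
     (hamiltonian_on (insert {x, y} G) U \<or>
      longest_path_length U G < longest_path_length U (insert {x, y} G))}"

lemma boosters_subset_Pow: "boosters U G \<subseteq> Pow U"
  by (auto simp: boosters_def)

lemma hamiltonian_on_if_closed_path:
  "is_path U G vs \<Longrightarrow> set vs = U \<Longrightarrow> 3 \<le> length vs \<Longrightarrow> {last vs, hd vs} \<in> G \<Longrightarrow>
    hamiltonian_on G U"
  unfolding hamiltonian_on_def is_path_def path_edges_subset_iff by blast

lemma path_extends_via_closing_edge:
  assumes "is_path U G Q" "a \<in> set Q" "b \<in> U - set Q" "{a, b} \<in> G"
  shows "\<exists>vs. is_path U (insert {hd Q, last Q} G) vs \<and> length vs = Suc (length Q)"
proof -
  obtain k where k: "k < length Q" "a = Q ! k" using assms(2) by (metis in_set_conv_nth)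
  define T where "T = take (Suc k) Q"
  define D where "D = drop (Suc k) Q"
  have "Q = T @ D" "T \<noteq> []" "last T = a" "hd T = hd Q"
    using k by (auto simp: T_def D_def last_take_Suc)
  have "path_edges T \<subseteq> G" "path_edges D \<subseteq> G"
    using assms(1) path_edges_append[of T D] \<open>Q = T @ D\<close> \<open>T \<noteq> []\<close>
    by (cases "D = []"; auto simp: is_path_def)+
  text \<open>Close Q into a cycle with the edge between its ends, reopen it after a, and append b.\<close>
  have "path_edges (D @ T) \<subseteq> insert {hd Q, last Q} G"
  proof (cases "D = []")
    case False
    then have "last D = last Q" using \<open>Q = T @ D\<close> by (metis last_append)
    with False show ?thesis
      using path_edges_append[OF False \<open>T \<noteq> []\<close>] \<open>path_edges T \<subseteq> G\<close> \<open>path_edges D \<subseteq> G\<close>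
        \<open>hd T = hd Q\<close> by (auto simp: insert_commute)
  qed (use \<open>path_edges T \<subseteq> G\<close> in auto)
  moreover have "last (D @ T) = a" using \<open>T \<noteq> []\<close> \<open>last T = a\<close> by simp
  moreover have "set (D @ T) = set Q" "distinct (D @ T)"
    using assms(1) \<open>Q = T @ D\<close> by (auto simp: is_path_def)
  ultimately have "is_path U (insert {hd Q, last Q} G) (D @ T @ [b])"
    using assms \<open>T \<noteq> []\<close> by (auto simp: is_path_def path_edges_snoc[of "D @ T", simplified])
  moreover have "length (D @ T @ [b]) = Suc (length Q)"
    using \<open>Q = T @ D\<close> by (metis length_append length_append_singleton add.commute append.assoc)
  ultimately show ?thesis by blast
qed

lemma longest_path_ends_booster:
  assumes "finite U" "8 \<le> card U" "\<forall>e\<in>G. e \<subseteq> U" "is_expander2 U G"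
    and "is_longest_path U G Q" "2 \<le> length Q"
  shows "{hd Q, last Q} \<in> boosters U G"
proof -
  have Q: "is_path U G Q" "length Q = longest_path_length U G"
    using assms(5) by (auto simp: is_longest_path_def)
  then have "Q \<noteq> []" "distinct Q" "set Q \<subseteq> U" by (auto simp: is_path_def)
  then have ends: "hd Q \<noteq> last Q" "hd Q \<in> U" "last Q \<in> U"
    using assms(6) by (auto simp: hd_conv_nth last_conv_nth nth_eq_iff_index_eq)
  let ?G' = "insert {hd Q, last Q} G"
  have "hamiltonian_on ?G' U \<or> longest_path_length U G < longest_path_length U ?G'"
  proof (cases "set Q = U")
    case True
    then have "3 \<le> length Q"
      using distinct_card[OF \<open>distinct Q\<close>] assms(2) by simp
    then have "hamiltonian_on ?G' U"
      using hamiltonian_on_if_closed_path[OF is_path_mono[OF Q(1)] True] by (auto simp: insert_commute)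
    then show ?thesis ..
  next
    case False
    then obtain a b where "a \<in> set Q" "b \<in> U - set Q" "{a, b} \<in> G"
      using expander_edge_leaving[OF assms(1-4) \<open>set Q \<subseteq> U\<close>] \<open>Q \<noteq> []\<close> by auto
    then obtain vs where "is_path U ?G' vs" "length vs = Suc (length Q)"
      using path_extends_via_closing_edge[OF Q(1)] by blast
    then have "longest_path_length U G < longest_path_length U ?G'"
      using is_path_length_le_longest[OF assms(1)] Q(2) by fastforce
    then show ?thesis ..
  qed
  with ends show ?thesis unfolding boosters_def by blast
qed

lemma longest_path_from_rotation_end:
  assumes "is_longest_path U G P" "v \<in> rotation_ends G P"
  shows "\<exists>R. is_longest_path U G R \<and> hd R = v \<and> length R = length P"
proof -
  obtain Q where Q: "Q \<in> rotations G P" "last Q = v"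
    using assms(2) by (auto simp: rotation_ends_def)
  have "is_longest_path U G Q" using rotations_longest_path[OF assms(1) Q(1)] .
  moreover have "is_path U G P" using assms(1) by (simp add: is_longest_path_def)
  then have "length Q = length P" "Q \<noteq> []"
    using rotations_path[OF _ Q(1)] by (auto simp: is_path_def)
  ultimately show ?thesis using Q(2)
    by (intro exI[of _ "rev Q"]) (simp add: is_longest_path_def is_path_rev hd_rev)
qed

lemma rotation_end_booster:
  assumes "finite U" "8 \<le> card U" "\<forall>e\<in>G. e \<subseteq> U" "is_expander2 U G"
    and "is_longest_path U G R" "2 \<le> length R" "w \<in> rotation_ends G R"
  shows "{hd R, w} \<in> boosters U G"
proof -
  obtain Q where Q: "Q \<in> rotations G R" "last Q = w"
    using assms(7) by (auto simp: rotation_ends_def)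
  have "is_longest_path U G Q" using rotations_longest_path[OF assms(5) Q(1)] .
  moreover have "is_path U G R" using assms(5) by (simp add: is_longest_path_def)
  then have "hd Q = hd R" "length Q = length R" using rotations_path[OF _ Q(1)] by auto
  moreover have "2 \<le> length Q" using assms(6) \<open>length Q = length R\<close> by simp
  ultimately have "{hd Q, last Q} \<in> boosters U G" by (intro longest_path_ends_booster[OF assms(1-4)])
  then show ?thesis unfolding \<open>hd Q = hd R\<close> Q(2) .
qed

lemma doubleton_preimage_small:
  "finite {(a, b). {a, b} = e} \<and> card {(a, b). {a, b} = e} \<le> 2"
proof (cases "\<exists>x y. {x, y} = e")
  case True
  then obtain x y where "{x, y} = e" by blast
  have sub: "{(a, b). {a, b} = e} \<subseteq> {(x, y), (y, x)}"
  proof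
    fix p assume "p \<in> {(a, b). {a, b} = e}"
    then obtain a b where "p = (a, b)" "{a, b} = e" by blast
    with \<open>{x, y} = e\<close> have "{a, b} = {x, y}" by simp
    then have "a = x \<and> b = y \<or> a = y \<and> b = x" unfolding doubleton_eq_iff .
    with \<open>p = (a, b)\<close> show "p \<in> {(x, y), (y, x)}" by blast
  qed
  have "card {(a, b). {a, b} = e} \<le> card {(x, y), (y, x)}" by (rule card_mono[OF _ sub]) simp
  also have "\<dots> \<le> 2" by (rule card_insert_le_m1) simp_all
  finally show ?thesis using finite_subset[OF sub] by simp
next
  case False
  then have "{(a, b). {a, b} = e} = {}" by auto
  then show ?thesis by simp
qed

lemma card_Sigma_le_twice_doubletons:
  assumes "finite B" "\<And>v w. v \<in> S1 \<Longrightarrow> w \<in> S2 v \<Longrightarrow> {v, w} \<in> B"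
  shows "card (Sigma S1 S2) \<le> 2 * card B"
proof -
  have eq: "{(a, b). {a, b} \<in> B} = (\<Union>e\<in>B. {(a, b). {a, b} = e})" by auto
  have "card (Sigma S1 S2) \<le> card (\<Union>e\<in>B. {(a, b). {a, b} = e})"
    using assms by (intro card_mono) (auto simp: doubleton_preimage_small)
  also have "\<dots> \<le> (\<Sum>e\<in>B. card {(a, b). {a, b} = e})"
    using card_UN_le[OF assms(1)] .
  also have "\<dots> \<le> (\<Sum>e\<in>B. 2)"
    by (rule sum_mono) (use doubleton_preimage_small in blast)
  finally show ?thesis by simp
qed

lemma card_Sigma_ge_square:
  fixes N :: real
  assumes "finite S1" "0 \<le> N" "N < card S1" "\<And>v. v \<in> S1 \<Longrightarrow> finite (S2 v) \<and> N < card (S2 v)"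
  shows "N * N \<le> card (Sigma S1 S2)"
proof -
  have "N * N \<le> card S1 * N"
    using assms(2,3) by (intro mult_right_mono) auto
  also have "\<dots> \<le> (\<Sum>v\<in>S1. real (card (S2 v)))"
    using assms(4) sum_bounded_below[of S1 N "\<lambda>v. real (card (S2 v))"] by (simp add: less_imp_le)
  also have "\<dots> = card (Sigma S1 S2)"
    using assms(1,4) by (simp add: card_SigmaI)
  finally show ?thesis .
qed

lemma card_boosters_ge:
  assumes "finite U" "12 \<le> card U" "\<forall>e\<in>G. e \<subseteq> U" "is_expander2 U G"
  shows "real (card U) ^ 2 / 32 \<le> real (card (boosters U G))"
proof -
  define N4 where "N4 = real (card U) / 4"
  have "U \<noteq> {}" using assms(2) by auto
  then obtain P where P: "is_longest_path U G P" using longest_path_exists[OF assms(1)] by blast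
  define S1 where "S1 = rotation_ends G P"
  have "is_path U G P" using P by (simp add: is_longest_path_def)
  then have "S1 \<subseteq> set P" unfolding S1_def by (rule rotation_ends_subset)
  then have "finite S1" "card S1 \<le> length P"
    using finite_subset card_mono[of "set P" S1] card_length[of P] by auto
  moreover have "N4 < card S1"
    using card_rotation_ends_gt[OF assms(1,3,4) P] by (simp add: S1_def N4_def)
  ultimately have "2 \<le> length P" using assms(2) by (simp add: N4_def)
  text \<open>Double counting: every end v of a rotation of P starts a longest path R v, and every
    end w of a rotation of R v gives a booster {v, w}.\<close>
  define R where "R v = (SOME R. is_longest_path U G R \<and> hd R = v \<and> length R = length P)" for v
  have R: "is_longest_path U G (R v) \<and> hd (R v) = v \<and> length (R v) = length P" if "v \<in> S1" for v
    unfolding R_def using someI_ex[OF longest_path_from_rotation_end[OF P that[unfolded S1_def]]] .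
  define S2 where "S2 v = rotation_ends G (R v)" for v
  have S2: "finite (S2 v) \<and> N4 < card (S2 v)" if "v \<in> S1" for v
  proof -
    have "is_longest_path U G (R v)" using R[OF that] by simp
    then have "N4 < card (S2 v)"
      using card_rotation_ends_gt[OF assms(1,3,4)] by (simp add: S2_def N4_def)
    moreover have "is_path U G (R v)" using R[OF that] by (simp add: is_longest_path_def)
    then have "finite (S2 v)"
      unfolding S2_def by (rule finite_subset[OF rotation_ends_subset finite_set])
    ultimately show ?thesis by simp
  qed
  have "{v, w} \<in> boosters U G" if "v \<in> S1" "w \<in> S2 v" for v w
    using rotation_end_booster[OF assms(1) _ assms(3,4), of "R v" w] R[OF that(1)] that(2)
      assms(2) \<open>2 \<le> length P\<close>
    by (simp add: S2_def)
  moreover have "finite (boosters U G)"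
    using finite_subset[OF boosters_subset_Pow] assms(1) by blast
  ultimately have "card (Sigma S1 S2) \<le> 2 * card (boosters U G)"
    by (intro card_Sigma_le_twice_doubletons)
  moreover have "N4 * N4 \<le> card (Sigma S1 S2)"
    using \<open>finite S1\<close> \<open>N4 < card S1\<close> S2 by (intro card_Sigma_ge_square) (auto simp: N4_def)
  ultimately show ?thesis by (simp add: N4_def power2_eq_square)
qed


section \<open>Events in G(n,p)\<close>

lemma gnp_prob_nonneg: "0 \<le> p \<Longrightarrow> p \<le> 1 \<Longrightarrow> 0 \<le> gnp_prob n p P"
  unfolding gnp_prob_def by (intro sum_nonneg) auto

lemma finite_all_edges: "finite (all_edges n)"
  and card_all_edges_le: "card (all_edges n) \<le> n ^ 2"
proof -
  have sub: "all_edges n \<subseteq> (\<lambda>(u, v). {u, v}) ` ({..<n} \<times> {..<n})"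
    unfolding all_edges_def by auto
  then show "finite (all_edges n)" using finite_subset by blast
  have "card (all_edges n) \<le> card ((\<lambda>(u, v). {u, v}) ` ({..<n} \<times> {..<n}))"
    using sub by (intro card_mono) auto
  also have "\<dots> \<le> card ({..<n} \<times> {..<n})" by (rule card_image_le) simp
  finally show "card (all_edges n) \<le> n ^ 2" by (simp add: power2_eq_square)
qed

lemma sum_Pow_binomial:
  fixes a b :: "'a :: comm_semiring_1"
  assumes "finite R"
  shows "(\<Sum>T\<in>Pow R. a ^ card T * b ^ (card R - card T)) = (a + b) ^ card R"
proof -
  have "(a + b) ^ card R = (\<Prod>x\<in>R. a + b)" by simp
  also have "\<dots> = (\<Sum>T\<in>Pow R. (\<Prod>x\<in>T. a) * (\<Prod>x\<in>R - T. b))"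
    by (rule prod_add[OF assms])
  also have "\<dots> = (\<Sum>T\<in>Pow R. a ^ card T * b ^ (card R - card T))"
    using assms by (intro sum.cong refl) (auto simp: card_Diff_subset finite_subset)
  finally show ?thesis ..
qed

lemma Pow_contains_avoids_eq:
  assumes "S \<subseteq> A" "B \<subseteq> A" "S \<inter> B = {}"
  shows "{E \<in> Pow A. S \<subseteq> E \<and> E \<inter> B = {}} = (\<union>) S ` Pow (A - S - B)"
proof
  show "{E \<in> Pow A. S \<subseteq> E \<and> E \<inter> B = {}} \<subseteq> (\<union>) S ` Pow (A - S - B)"
  proof
    fix E assume "E \<in> {E \<in> Pow A. S \<subseteq> E \<and> E \<inter> B = {}}"
    then have "E = S \<union> (E - S)" "E - S \<in> Pow (A - S - B)" by auto
    then show "E \<in> (\<union>) S ` Pow (A - S - B)" by blast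
  qed
qed (use assms in auto)

lemma gnp_prob_contains_avoids:
  assumes "S \<subseteq> all_edges n" "B \<subseteq> all_edges n" "S \<inter> B = {}"
  shows "gnp_prob n p (\<lambda>E. S \<subseteq> E \<and> E \<inter> B = {}) = p ^ card S * (1 - p) ^ card B"
proof -
  define A where "A = all_edges n"
  define R where "R = A - S - B"
  have fin: "finite A" "finite S" "finite B" "finite R"
    using finite_all_edges finite_subset[OF assms(1) finite_all_edges]
      finite_subset[OF assms(2) finite_all_edges] by (auto simp: A_def R_def)
  have card_A: "card A = card S + card B + card R"
  proof -
    have "A = S \<union> B \<union> R" using assms(1,2) by (auto simp: A_def R_def)
    moreover have "card (S \<union> B) = card S + card B" using fin assms(3) by (simp add: card_Un_disjoint)
    moreover have "card (S \<union> B \<union> R) = card (S \<union> B) + card R"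
      using fin by (intro card_Un_disjoint) (auto simp: R_def)
    ultimately show ?thesis by simp
  qed
  have events: "{E \<in> Pow A. S \<subseteq> E \<and> E \<inter> B = {}} = (\<union>) S ` Pow R"
    unfolding R_def using assms by (intro Pow_contains_avoids_eq) (auto simp: A_def)
  have "inj_on ((\<union>) S) (Pow R)" by (rule inj_onI) (auto simp: R_def)
  have weight: "p ^ card (S \<union> T) * (1 - p) ^ (card A - card (S \<union> T))
      = (p ^ card S * (1 - p) ^ card B) * (p ^ card T * (1 - p) ^ (card R - card T))"
    if "T \<in> Pow R" for T
  proof -
    have "finite T" "S \<inter> T = {}" "T \<subseteq> R" using that fin(4) finite_subset by (auto simp: R_def)
    then have "card (S \<union> T) = card S + card T" "card T \<le> card R"
      using fin by (simp_all add: card_Un_disjoint card_mono)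
    then have "card A - card (S \<union> T) = card B + (card R - card T)" using card_A by simp
    with \<open>card (S \<union> T) = card S + card T\<close> show ?thesis by (simp add: power_add mult_ac)
  qed
  have "gnp_prob n p (\<lambda>E. S \<subseteq> E \<and> E \<inter> B = {})
      = (\<Sum>E\<in>{E \<in> Pow A. S \<subseteq> E \<and> E \<inter> B = {}}. p ^ card E * (1 - p) ^ (card A - card E))"
    unfolding gnp_prob_def A_def[symmetric] using fin by (intro sum.inter_filter[symmetric]) simp
  also have "\<dots> = (\<Sum>T\<in>Pow R. p ^ card (S \<union> T) * (1 - p) ^ (card A - card (S \<union> T)))"
    unfolding events using sum.reindex[OF \<open>inj_on ((\<union>) S) (Pow R)\<close>] by simp
  also have "\<dots> = p ^ card S * (1 - p) ^ card B * (\<Sum>T\<in>Pow R. p ^ card T * (1 - p) ^ (card R - card T))"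
    by (simp add: weight sum_distrib_left)
  also have "\<dots> = p ^ card S * (1 - p) ^ card B"
    using sum_Pow_binomial[OF fin(4), of p "1 - p"] by simp
  finally show ?thesis .
qed

lemma gnp_prob_union_bound:
  assumes "0 \<le> p" "p \<le> 1" "finite C"
    and cover: "\<And>E. E \<subseteq> all_edges n \<Longrightarrow> P E \<Longrightarrow> \<exists>c\<in>C. Q c E"
  shows "gnp_prob n p P \<le> (\<Sum>c\<in>C. gnp_prob n p (Q c))"
proof -
  define w where "w E = p ^ card E * (1 - p) ^ (card (all_edges n) - card E)" for E :: "nat set set"
  have w_nonneg: "0 \<le> w E" for E using assms(1,2) by (simp add: w_def)
  have "(if P E then w E else 0) \<le> (\<Sum>c\<in>C. if Q c E then w E else 0)"
    if E: "E \<in> Pow (all_edges n)" for E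
  proof (cases "P E")
    case True
    then obtain c where "c \<in> C" "Q c E" using cover[of E] E by auto
    then have "w E = (if Q c E then w E else 0)" by simp
    also have "\<dots> \<le> (\<Sum>c\<in>C. if Q c E then w E else 0)"
      by (rule member_le_sum) (use \<open>c \<in> C\<close> assms(3) w_nonneg in auto)
    finally show ?thesis using True by simp
  qed (simp add: sum_nonneg w_nonneg)
  then have "gnp_prob n p P \<le> (\<Sum>E\<in>Pow (all_edges n). \<Sum>c\<in>C. if Q c E then w E else 0)"
    unfolding gnp_prob_def w_def[symmetric] by (rule sum_mono)
  also have "\<dots> = (\<Sum>c\<in>C. gnp_prob n p (Q c))"
    unfolding gnp_prob_def w_def[symmetric] by (rule sum.swap)
  finally show ?thesis .
qed

lemma one_minus_power_le_exp:
  fixes p :: real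
  assumes "p \<le> 1"
  shows "(1 - p) ^ k \<le> exp (- p * real k)"
proof -
  have "(1 - p) ^ k \<le> exp (- p) ^ k"
    using assms exp_ge_add_one_self[of "- p"] by (intro power_mono) auto
  also have "\<dots> = exp (- p * real k)" by (simp add: exp_of_nat_mult[symmetric] mult.commute)
  finally show ?thesis .
qed

lemma sum_powers_small_subsets_le:
  fixes p c K :: real
  assumes "finite A" "0 \<le> p" "0 \<le> c"
  shows "(\<Sum>H\<in>{H \<in> Pow A. real (card H) \<le> K}. p ^ card H) \<le> exp (c * K + p * exp (- c) * real (card A))"
proof -
  define q where "q = p * exp (- c)"
  have "0 \<le> q" using assms(2) by (simp add: q_def)
  have small: "p ^ card H \<le> exp (c * K) * q ^ card H" if "real (card H) \<le> K" for H
  proof -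
    have "p ^ card H = exp (c * real (card H)) * q ^ card H"
      by (simp add: q_def power_mult_distrib exp_of_nat_mult[symmetric] exp_minus field_simps)
    also have "\<dots> \<le> exp (c * K) * q ^ card H"
      using that assms(3) \<open>0 \<le> q\<close> by (intro mult_right_mono) (auto intro: mult_left_mono)
    finally show ?thesis .
  qed
  have "(\<Sum>H\<in>{H \<in> Pow A. real (card H) \<le> K}. p ^ card H)
      \<le> (\<Sum>H\<in>{H \<in> Pow A. real (card H) \<le> K}. exp (c * K) * q ^ card H)"
    by (rule sum_mono) (use small in auto)
  also have "\<dots> \<le> (\<Sum>H\<in>Pow A. exp (c * K) * q ^ card H)"
    by (rule sum_mono2) (use assms(1) \<open>0 \<le> q\<close> in auto)
  also have "\<dots> = exp (c * K) * (\<Sum>H\<in>Pow A. q ^ card H * 1 ^ (card A - card H))"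
    by (simp add: sum_distrib_left)
  also have "\<dots> = exp (c * K) * (q + 1) ^ card A"
    by (simp only: sum_Pow_binomial[OF assms(1)])
  also have "\<dots> \<le> exp (c * K) * exp (q * real (card A))"
  proof -
    have "(q + 1) ^ card A \<le> exp q ^ card A"
      using \<open>0 \<le> q\<close> by (intro power_mono) (auto simp: add.commute exp_ge_add_one_self)
    then show ?thesis by (simp add: exp_of_nat_mult[symmetric] mult.commute)
  qed
  finally show ?thesis by (simp add: q_def exp_add)
qed

section \<open>Witnesses of failure\<close>

lemma hamiltonian_on_mono: "hamiltonian_on G U \<Longrightarrow> G \<subseteq> G' \<Longrightarrow> hamiltonian_on G' U"
  unfolding hamiltonian_on_def by blast

lemma is_expander2_mono:
  assumes "is_expander2 U F" "F \<subseteq> G" "finite U" "\<forall>e\<in>G. e \<subseteq> U"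
  shows "is_expander2 U G"
  unfolding is_expander2_def
proof (intro allI impI)
  fix A assume A: "A \<subseteq> U \<and> real (card A) \<le> real (card U) / 4"
  have "nbhd G A \<subseteq> U" using assms(4) by (auto simp: nbhd_def)
  then have "finite (nbhd G A)" using assms(3) finite_subset by blast
  moreover have "nbhd F A \<subseteq> nbhd G A" using assms(2) by (auto simp: nbhd_def)
  ultimately have "card (nbhd F A) \<le> card (nbhd G A)" by (rule card_mono)
  moreover have "2 * card A \<le> card (nbhd F A)" using assms(1) A by (simp add: is_expander2_def)
  ultimately show "2 * card A \<le> card (nbhd G A)" by linarith
qed

lemma boosters_subset_all_edges: "U \<subseteq> {..<n} \<Longrightarrow> boosters U G \<subseteq> all_edges n"
  unfolding boosters_def all_edges_def by blast

lemma boosters_disjoint_if_not_hamiltonian: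
  assumes "finite U" "U \<noteq> {}" "H \<subseteq> E" "longest_path_length U E \<le> longest_path_length U H"
    and "\<not> hamiltonian_on E U"
  shows "E \<inter> boosters U H = {}"
proof (rule ccontr)
  assume "E \<inter> boosters U H \<noteq> {}"
  then obtain e where "e \<in> E"
    and gain: "hamiltonian_on (insert e H) U \<or>
      longest_path_length U H < longest_path_length U (insert e H)"
    unfolding boosters_def by blast
  then have "insert e H \<subseteq> E" using assms(3) by blast
  from gain show False
  proof
    assume "hamiltonian_on (insert e H) U"
    then show False using hamiltonian_on_mono[OF _ \<open>insert e H \<subseteq> E\<close>] assms(5) by blast
  next
    assume "longest_path_length U H < longest_path_length U (insert e H)"
    then show False
      using longest_path_length_mono[OF assms(1,2) \<open>insert e H \<subseteq> E\<close>] assms(4) by linarith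
  qed
qed

(* The slack n in the edge bound makes room for the edges of a longest path of G[U]. *)
definition witnesses :: "nat \<Rightarrow> real \<Rightarrow> (nat set \<times> nat set set) set" where
  "witnesses n p = {(U, H). U \<subseteq> {..<n} \<and> H \<subseteq> all_edges n \<and>
     real (card H) \<le> p * real n ^ 2 / 10^17 + real n \<and> 4 * real n / 10^6 \<le> real (card U) \<and>
     (\<forall>e\<in>H. e \<subseteq> U) \<and> is_expander2 U H \<and> \<not> hamiltonian_on H U}"

lemma witnesses_subset:
  "witnesses n p \<subseteq>
     Pow {..<n} \<times> {H \<in> Pow (all_edges n). real (card H) \<le> p * real n ^ 2 / 10^17 + real n}"
  by (auto simp: witnesses_def)

lemma finite_witnesses: "finite (witnesses n p)"
  by (rule finite_subset[OF witnesses_subset]) (simp add: finite_all_edges)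

lemma witness_of_bad_graph:
  assumes "3000000 \<le> real n" "E \<subseteq> all_edges n" "\<not> lemma_property n p E"
  shows "\<exists>(U, H) \<in> witnesses n p. H \<subseteq> E \<and> E \<inter> boosters U H = {}"
proof -
  obtain U F where U: "U \<subseteq> {..<n}" "4 * real n / 10^6 \<le> real (card U)"
    and F: "subgraph_on E U F" "real (card F) \<le> p * real n ^ 2 / 10^17" "is_expander2 U F"
    and not_ham: "\<not> hamiltonian_on E U"
    using assms(3) unfolding lemma_property_def by blast
  have "finite U" using U(1) finite_subset by blast
  have "12 \<le> card U" using U(2) assms(1) by simp
  then have "U \<noteq> {}" by auto
  then obtain P where P: "is_longest_path U E P" using longest_path_exists[OF \<open>finite U\<close>] by blast
  text \<open>Adding a longest path of G[U] to F makes the longest path length of G[U] visible in H.\<close>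
  define H where "H = F \<union> path_edges P"
  have "set P \<subseteq> U" "path_edges P \<subseteq> E" using P by (auto simp: is_longest_path_def is_path_def)
  then have "H \<subseteq> E" "\<forall>e\<in>H. e \<subseteq> U"
    using F(1) path_edges_subset_set[of _ P] unfolding H_def subgraph_on_def by blast+
  have "card H \<le> card F + card (path_edges P)" unfolding H_def by (rule card_Un_le)
  also have "\<dots> \<le> card F + n"
    using card_path_edges_le[of P] is_path_length_le_card[OF \<open>finite U\<close>] P U(1)
      card_mono[OF finite_lessThan U(1)]
    by (fastforce simp: is_longest_path_def)
  finally have "real (card H) \<le> p * real n ^ 2 / 10^17 + real n" using F(2) by linarith
  moreover have "is_expander2 U H"
    using is_expander2_mono[OF F(3) _ \<open>finite U\<close> \<open>\<forall>e\<in>H. e \<subseteq> U\<close>] by (simp add: H_def)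
  moreover have "\<not> hamiltonian_on H U" using hamiltonian_on_mono \<open>H \<subseteq> E\<close> not_ham by blast
  moreover have "is_path U H P" using P by (auto simp: H_def is_longest_path_def is_path_def)
  then have "longest_path_length U E \<le> longest_path_length U H"
    using is_path_length_le_longest[OF \<open>finite U\<close>] P by (metis is_longest_path_def)
  then have "E \<inter> boosters U H = {}"
    using boosters_disjoint_if_not_hamiltonian[OF \<open>finite U\<close> \<open>U \<noteq> {}\<close> \<open>H \<subseteq> E\<close>] not_ham
    by blast
  ultimately show ?thesis
    using U \<open>H \<subseteq> E\<close> \<open>\<forall>e\<in>H. e \<subseteq> U\<close> assms(2) unfolding witnesses_def by blast
qed

lemma witness_event_prob_le:
  assumes "(U, H) \<in> witnesses n p" "3000000 \<le> real n" "0 \<le> p" "p \<le> 1"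
  shows "gnp_prob n p (\<lambda>E. H \<subseteq> E \<and> E \<inter> boosters U H = {})
    \<le> p ^ card H * exp (- p * real n ^ 2 / (2 * 10^12))"
proof -
  have U: "U \<subseteq> {..<n}" "H \<subseteq> all_edges n" "4 * real n / 10^6 \<le> real (card U)"
    "\<forall>e\<in>H. e \<subseteq> U" "is_expander2 U H" "\<not> hamiltonian_on H U"
    using assms(1) by (auto simp: witnesses_def)
  have "finite U" using U(1) finite_subset by blast
  have "12 \<le> card U" using U(3) assms(2) by simp
  then have "U \<noteq> {}" by auto
  have "H \<inter> boosters U H = {}"
    by (rule boosters_disjoint_if_not_hamiltonian[OF \<open>finite U\<close> \<open>U \<noteq> {}\<close> order_refl order_refl U(6)])
  have "real n ^ 2 / (2 * 10^12) \<le> real (card U) ^ 2 / 32"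
  proof -
    have "(4 * real n / 10^6) ^ 2 \<le> real (card U) ^ 2"
      using U(3) assms(2) by (intro power_mono) auto
    then show ?thesis by (simp add: power_divide)
  qed
  also have "\<dots> \<le> real (card (boosters U H))"
    using card_boosters_ge[OF \<open>finite U\<close> \<open>12 \<le> card U\<close> U(4,5)] .
  finally have many_boosters: "real n ^ 2 / (2 * 10^12) \<le> real (card (boosters U H))" .
  have "gnp_prob n p (\<lambda>E. H \<subseteq> E \<and> E \<inter> boosters U H = {})
      = p ^ card H * (1 - p) ^ card (boosters U H)"
    by (rule gnp_prob_contains_avoids[OF U(2) boosters_subset_all_edges[OF U(1)]]) fact
  also have "\<dots> \<le> p ^ card H * exp (- p * real (card (boosters U H)))"
    using one_minus_power_le_exp[OF assms(4)] assms(3) by (intro mult_left_mono) auto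
  also have "\<dots> \<le> p ^ card H * exp (- p * real n ^ 2 / (2 * 10^12))"
  proof -
    have "p * (real n ^ 2 / (2 * 10^12)) \<le> p * real (card (boosters U H))"
      by (rule mult_left_mono[OF many_boosters assms(3)])
    then show ?thesis using assms(3) by (intro mult_left_mono) auto
  qed
  finally show ?thesis .
qed

lemma sum_witnesses_le:
  fixes p :: real
  assumes "0 \<le> p"
  shows "(\<Sum>c\<in>witnesses n p. p ^ card (snd c))
    \<le> 2 ^ n * exp (100 * (p * real n ^ 2 / 10^17 + real n) + p * exp (- 100) * real n ^ 2)"
proof -
  define K where "K = p * real n ^ 2 / 10^17 + real n"
  define Hs where "Hs = {H \<in> Pow (all_edges n). real (card H) \<le> K}"
  have "(\<Sum>c\<in>witnesses n p. p ^ card (snd c)) \<le> (\<Sum>c\<in>Pow {..<n} \<times> Hs. p ^ card (snd c))"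
    using witnesses_subset assms finite_all_edges
    by (intro sum_mono2) (auto simp: Hs_def K_def)
  also have "\<dots> = 2 ^ n * (\<Sum>H\<in>Hs. p ^ card H)"
    by (simp add: sum.cartesian_product' card_Pow)
  also have "\<dots> \<le> 2 ^ n * exp (100 * K + p * exp (- 100) * real (card (all_edges n)))"
    unfolding Hs_def
    using sum_powers_small_subsets_le[OF finite_all_edges assms, where c = 100 and K = K] by simp
  also have "\<dots> \<le> 2 ^ n * exp (100 * K + p * exp (- 100) * real n ^ 2)"
    using card_all_edges_le[of n] assms
    by (simp del: of_nat_power add: of_nat_power[symmetric] mult_left_mono)
  finally show ?thesis by (simp add: K_def)
qed

lemma two_power_le_exp: "(2::real) ^ k \<le> exp (real k)"
proof -
  have "(2::real) ^ k \<le> exp 1 ^ k"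
    using exp_ge_add_one_self[of 1] by (intro power_mono) auto
  then show ?thesis by (simp add: exp_of_nat_mult[symmetric])
qed

lemma exp_neg_100_le: "exp (- 100 :: real) \<le> 1 / 10^20"
proof -
  have "10^20 \<le> exp (100 :: real)" using two_power_le_exp[of 100] by simp
  then show ?thesis by (simp add: exp_minus field_simps)
qed

lemma union_bound_exponent_le:
  fixes p :: real
  assumes "0 \<le> p" "10^17 \<le> p * real n"
  shows "real n + 100 * (p * real n ^ 2 / 10^17 + real n) + p * exp (- 100) * real n ^ 2
    - p * real n ^ 2 / (2 * 10^12) \<le> - real n"
proof -
  define x where "x = p * real n ^ 2"
  have "10^17 * real n \<le> x"
    using mult_right_mono[OF assms(2), of "real n"] by (simp add: x_def power2_eq_square mult.assoc)
  moreover have "exp (- 100) * x \<le> 1 / 10^20 * x"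
    using assms(1) by (intro mult_right_mono[OF exp_neg_100_le]) (simp add: x_def)
  ultimately have
    "real n + 100 * (x / 10^17 + real n) + exp (- 100) * x - x / (2 * 10^12) \<le> - real n"
    using of_nat_0_le_iff[of n] by simp
  then show ?thesis by (simp add: x_def mult_ac)
qed

lemma gnp_prob_not_lemma_property_le:
  assumes "0 \<le> p" "p \<le> 1" "10^17 \<le> p * real n"
  shows "gnp_prob n p (\<lambda>E. \<not> lemma_property n p E) \<le> exp (- real n)"
proof -
  define X where "X = exp (- p * real n ^ 2 / (2 * 10^12))"
  have "p * real n \<le> real n" using mult_right_mono[OF assms(2), of "real n"] by simp
  then have "10^17 \<le> real n" using assms(3) by linarith
  then have n: "3000000 \<le> real n" by simp
  have "gnp_prob n p (\<lambda>E. \<not> lemma_property n p E)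
      \<le> (\<Sum>c\<in>witnesses n p. gnp_prob n p (\<lambda>E. snd c \<subseteq> E \<and> E \<inter> boosters (fst c) (snd c) = {}))"
    using witness_of_bad_graph[OF n]
    by (intro gnp_prob_union_bound[OF assms(1,2) finite_witnesses]) (fastforce simp: case_prod_beta)
  also have "\<dots> \<le> (\<Sum>c\<in>witnesses n p. p ^ card (snd c) * X)"
  proof (rule sum_mono)
    fix c assume "c \<in> witnesses n p"
    then show "gnp_prob n p (\<lambda>E. snd c \<subseteq> E \<and> E \<inter> boosters (fst c) (snd c) = {})
        \<le> p ^ card (snd c) * X"
      using witness_event_prob_le[OF _ n assms(1,2), of "fst c" "snd c"] by (simp add: X_def)
  qed
  also have "\<dots> = (\<Sum>c\<in>witnesses n p. p ^ card (snd c)) * X"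
    by (simp add: sum_distrib_right)
  also have "\<dots> \<le> exp (real n) * exp (100 * (p * real n ^ 2 / 10^17 + real n)
      + p * exp (- 100) * real n ^ 2) * X"
    using sum_witnesses_le[OF assms(1), of n] two_power_le_exp[of n]
    by (intro mult_right_mono) (auto simp: X_def intro: order_trans mult_right_mono)
  also have "\<dots> \<le> exp (- real n)"
    using union_bound_exponent_le[OF assms(1,3)] by (simp add: X_def flip: exp_add exp_diff)
  finally show ?thesis .
qed

theorem lemma6p8:
  fixes p :: "nat \<Rightarrow> real"
  assumes "\<And>n. 0 \<le> p n \<and> p n \<le> 1"
      and "eventually (\<lambda>n. p n * real n \<ge> 10^17) at_top"
  shows "(\<lambda>n. gnp_prob n (p n) (\<lambda>E. \<not> lemma_property n (p n) E))
           \<in> o(\<lambda>n. 1 / real n ^ 2)"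
proof -
  have "eventually (\<lambda>n. norm (gnp_prob n (p n) (\<lambda>E. \<not> lemma_property n (p n) E))
      \<le> 1 * norm (exp (- real n))) at_top"
    using assms(2)
  proof eventually_elim
    case (elim n)
    with assms(1)[of n] show ?case
      using gnp_prob_not_lemma_property_le gnp_prob_nonneg by simp
  qed
  then have "(\<lambda>n. gnp_prob n (p n) (\<lambda>E. \<not> lemma_property n (p n) E)) \<in> O(\<lambda>n. exp (- real n))"
    by (rule bigoI)
  moreover have "(\<lambda>n. exp (- real n)) \<in> o(\<lambda>n. 1 / real n ^ 2)" by real_asymp
  ultimately show ?thesis by (rule landau_o.big_small_trans)
qed

end
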